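(* Let $q > 1$ be an integer. For all positive integers $n$ and $M$, $$|C(n,q,M)| \leq \left(\frac{q}{q-1}\right)^{n-1}q^{M-2^n+n+1}.$$
   Context: Fix the alphabet $\{x_0,\ldots,x_{q-1}\}$ of $q$ letters. A word $W$ is an instance of a word $V = y_0y_1\cdots y_{m-1}$ (each $y_i$ a letter) if $W = A_0A_1\cdots A_{m-1}$ with each $A_i$ a nonempty word and $A_i = A_j$ whenever $y_i = y_j$. The Zimin words are defined by $Z_0 := \varepsilon$ (the empty word) and $Z_{n+1} := Z_n z_n Z_n$ for distinct letters $z_0,z_1,\dots$. $C(n,q,M)$ denotes the set of words $W \in \{x_0,\ldots,x_{q-1}\}^M$ that are instances of $Z_n$. *)

theory Defs
  imports Main Complex_Main
begin

(* Words over the alphabet {x_0,...,x_{q-1}} are lists of naturals with entries < q.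
   Pattern letters z_0, z_1, ... are encoded as natural numbers 0, 1, ... *)

fun zimin :: "nat \<Rightarrow> nat list" where
  "zimin 0 = []"
| "zimin (Suc n) = zimin n @ [n] @ zimin n"

definition is_instance :: "'a list \<Rightarrow> 'b list \<Rightarrow> bool" where
  "is_instance W V \<longleftrightarrow>
     (\<exists>f :: 'b \<Rightarrow> 'a list. (\<forall>y \<in> set V. f y \<noteq> []) \<and> W = concat (map f V))"

definition C :: "nat \<Rightarrow> nat \<Rightarrow> nat \<Rightarrow> nat list set" where
  "C n q M = {W. length W = M \<and> set W \<subseteq> {..<q} \<and> is_instance W (zimin n)}"

end

(* An instance of Z_{n+1} is U A U with U an instance of Z_n (so |U| >= 2^n - 1) and A a
   nonempty word; hence |C(n+1,q,M)| <= sum over 2^n - 1 <= m < M/2 of |C(n,q,m)| q^(M-2m).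
   Inserting the bound for Z_n, the sum becomes a geometric tail in 1/q starting at 2^n - 1,
   which contributes the factor q/(q-1) and lowers the exponent by 2^n - 1. *)

theory Submission
  imports Defs
begin

lemma length_zimin: "length (zimin n) = 2 ^ n - 1"
  by (induction n) (simp_all add: Suc_leI)

lemma length_le_length_concat_map:
  assumes "\<forall>y \<in> set V. f y \<noteq> []"
  shows "length V \<le> length (concat (map f V))"
  using assms
proof (induction V)
  case (Cons y V)
  then show ?case
    by (cases "f y") auto
qed simp

lemma is_instance_length_le:
  assumes "is_instance W V"
  shows "length V \<le> length W"
  using assms length_le_length_concat_map unfolding is_instance_def by blast

lemma is_instance_zimin_Suc:
  assumes "is_instance W (zimin (Suc n))"
  obtains U A where "W = U @ A @ U" "A \<noteq> []" "is_instance U (zimin n)"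
proof -
  obtain f where f: "\<forall>y \<in> set (zimin (Suc n)). f y \<noteq> []" "W = concat (map f (zimin (Suc n)))"
    using assms unfolding is_instance_def by blast
  let ?U = "concat (map f (zimin n))"
  have "W = ?U @ f n @ ?U" "f n \<noteq> []" "is_instance ?U (zimin n)"
    using f unfolding is_instance_def by auto
  then show thesis by (rule that)
qed

definition words :: "nat \<Rightarrow> nat \<Rightarrow> nat list set" where
  "words q k = {W. set W \<subseteq> {..<q} \<and> length W = k}"

lemma finite_words: "finite (words q k)"
  unfolding words_def by (simp add: finite_lists_length_eq)

lemma card_words: "card (words q k) = q ^ k"
  unfolding words_def by (simp add: card_lists_length_eq)

lemma C_subset_words: "C n q M \<subseteq> words q M"
  unfolding C_def words_def by auto

lemma finite_C: "finite (C n q M)"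
  using C_subset_words finite_words by (rule finite_subset)

lemma C_1: "M > 0 \<Longrightarrow> C 1 q M = words q M"
  unfolding C_def words_def is_instance_def
  by (auto intro!: exI[of _ "\<lambda>_. _"])

lemma card_C_Suc_le:
  "card (C (Suc n) q M)
     \<le> (\<Sum>m \<in> {m. 2 ^ n - 1 \<le> m \<and> 2 * m < M}. card (C n q m) * q ^ (M - 2 * m))"
proof -
  let ?S = "{m. 2 ^ n - 1 \<le> m \<and> 2 * m < M}"
  let ?P = "\<lambda>m. (\<lambda>(U, A). U @ A @ U) ` (C n q m \<times> words q (M - 2 * m))"
  have finite_S: "finite ?S"
    by (rule finite_subset[of _ "{..<M}"]) auto
  have "C (Suc n) q M \<subseteq> (\<Union>m \<in> ?S. ?P m)"
  proof
    fix W assume W: "W \<in> C (Suc n) q M"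
    then obtain U A where UA: "W = U @ A @ U" "A \<noteq> []" "is_instance U (zimin n)"
      using is_instance_zimin_Suc unfolding C_def by blast
    then have "length U \<in> ?S"
      using W is_instance_length_le[OF UA(3)] by (auto simp: C_def length_zimin)
    moreover have "(U, A) \<in> C n q (length U) \<times> words q (M - 2 * length U)"
      using W UA unfolding C_def words_def by auto
    ultimately show "W \<in> (\<Union>m \<in> ?S. ?P m)"
      using UA(1) by force
  qed
  then have "card (C (Suc n) q M) \<le> card (\<Union>m \<in> ?S. ?P m)"
    by (rule card_mono[rotated])
      (intro finite_UN_I finite_imageI finite_cartesian_product finite_S finite_C finite_words)
  also have "\<dots> \<le> (\<Sum>m \<in> ?S. card (?P m))"
    by (rule card_UN_le[OF finite_S])
  also have "\<dots> \<le> (\<Sum>m \<in> ?S. card (C n q m \<times> words q (M - 2 * m)))"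
    by (intro sum_mono card_image_le) (simp add: finite_C finite_words)
  also have "\<dots> = (\<Sum>m \<in> ?S. card (C n q m) * q ^ (M - 2 * m))"
    by (simp add: card_cartesian_product card_words)
  finally show ?thesis .
qed

lemma sum_power_le_geometric_tail:
  fixes x :: real
  assumes "0 \<le> x" "x < 1" "finite S" "S \<subseteq> {a..}"
  shows "(\<Sum>m \<in> S. x ^ m) \<le> x ^ a / (1 - x)"
proof -
  define b where "b = Max (insert a S)"
  have "a \<le> b" "S \<subseteq> {a..b}"
    using assms(3,4) by (auto simp: b_def)
  then have "(\<Sum>m \<in> S. x ^ m) \<le> (\<Sum>m = a..b. x ^ m)"
    using assms(1) by (intro sum_mono2) auto
  also have "(1 - x) * (\<Sum>m = a..b. x ^ m) \<le> x ^ a"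
    using sum_gp_multiplied[OF \<open>a \<le> b\<close>, of x] assms(1) by simp
  then have "(\<Sum>m = a..b. x ^ m) \<le> x ^ a / (1 - x)"
    using assms(2) by (simp add: field_simps)
  finally show ?thesis .
qed

lemma power_int_mult_power_diff:
  fixes r :: "'a::field"
  assumes "r \<noteq> 0" "2 * m \<le> M"
  shows "r powi (int m + e) * r ^ (M - 2 * m) = r powi (int M + e) * inverse r ^ m"
proof -
  have "int M + e = (int m + e) + int (M - 2 * m) + int m"
    using assms(2) by simp
  then have "r powi (int M + e) = r powi (int m + e) * r ^ (M - 2 * m) * r ^ m"
    by (simp only: power_int_add[OF disjI1[OF assms(1)]] power_int_of_nat)
  moreover have "r ^ m * inverse r ^ m = 1"
    using assms(1) by (simp flip: power_mult_distrib)
  ultimately show ?thesis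
    by (simp add: mult.assoc)
qed

lemma geometric_tail_inverse:
  fixes r :: real
  assumes "r > 1"
  shows "inverse r ^ a / (1 - inverse r) = r / (r - 1) * r powi (- int a)"
  using assms by (simp add: power_int_minus power_inverse field_simps)

lemma card_C_Suc_bound:
  fixes B :: real and e :: int
  assumes "q > 1" "n > 0" "B \<ge> 0"
    and IH: "\<And>m. m > 0 \<Longrightarrow> real (card (C n q m)) \<le> B * real q powi (int m + e)"
  shows "real (card (C (Suc n) q M))
           \<le> B * (real q / (real q - 1)) * real q powi (int M + e - 2 ^ n + 1)"
proof -
  define x where "x = inverse (real q)"
  define a where "a = 2 ^ n - (1::nat)"
  define S where "S = {m. a \<le> m \<and> 2 * m < M}"
  define c where "c = B * real q powi (int M + e)"
  have q: "real q > 1"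
    using assms(1) by simp
  have "a > 0"
    using \<open>n > 0\<close> power_increasing[of 1 n "2::nat"] unfolding a_def by simp
  have "finite S"
    unfolding S_def by (rule finite_subset[of _ "{..<M}"]) auto
  have "real (card (C (Suc n) q M)) \<le> (\<Sum>m \<in> S. real (card (C n q m)) * real q ^ (M - 2 * m))"
    using of_nat_mono[OF card_C_Suc_le[of n q M]] unfolding S_def a_def by simp
  also have "\<dots> \<le> (\<Sum>m \<in> S. c * x ^ m)"
  proof (rule sum_mono)
    fix m assume "m \<in> S"
    then have "m > 0" "2 * m \<le> M"
      using \<open>a > 0\<close> unfolding S_def by auto
    have "real (card (C n q m)) * real q ^ (M - 2 * m)
            \<le> B * (real q powi (int m + e) * real q ^ (M - 2 * m))"
      using mult_right_mono[OF IH[OF \<open>m > 0\<close>], of "real q ^ (M - 2 * m)"]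
      by (simp add: mult.assoc)
    also have "\<dots> = c * x ^ m"
      using q \<open>2 * m \<le> M\<close> unfolding c_def x_def by (simp add: power_int_mult_power_diff)
    finally show "real (card (C n q m)) * real q ^ (M - 2 * m) \<le> c * x ^ m" .
  qed
  also have "\<dots> = c * (\<Sum>m \<in> S. x ^ m)"
    by (simp add: sum_distrib_left)
  also have "\<dots> \<le> c * (x ^ a / (1 - x))"
    using q \<open>finite S\<close> \<open>B \<ge> 0\<close>
    by (intro mult_left_mono sum_power_le_geometric_tail) (auto simp: x_def S_def c_def inverse_less_1_iff)
  also have "\<dots> = B * (real q / (real q - 1)) * (real q powi (int M + e) * real q powi (- int a))"
    unfolding c_def x_def geometric_tail_inverse[OF q] by (simp only: mult_ac)
  also have "real q powi (int M + e) * real q powi (- int a) = real q powi (int M + e + - int a)"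
    using q by (intro power_int_add[symmetric]) simp
  also have "int M + e + - int a = int M + e - 2 ^ n + 1"
    unfolding a_def by (simp add: of_nat_diff)
  finally show ?thesis .
qed

theorem mainTheorem5:
  fixes q n M :: nat
  assumes "q > 1" and "n > 0" and "M > 0"
  shows "real (card (C n q M))
           \<le> (real q / (real q - 1)) ^ (n - 1) * real q powi (int M - 2 ^ n + int n + 1)"
  using \<open>n > 0\<close> \<open>M > 0\<close>
proof (induction n arbitrary: M rule: nat_induct_non_zero)
  case 1
  then have "C 1 q M = words q M"
    by (rule C_1)
  then show ?case
    by (simp add: card_words)
next
  case (Suc n)
  let ?K = "real q / (real q - 1)"
  define e :: int where "e = int n + 1 - 2 ^ n"
  have IH: "real (card (C n q m)) \<le> ?K ^ (n - 1) * real q powi (int m + e)" if "m > 0" for m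
    using Suc.IH[OF that] by (simp add: e_def algebra_simps)
  have "?K ^ (n - 1) \<ge> 0"
    using \<open>q > 1\<close> by simp
  from card_C_Suc_bound[OF \<open>q > 1\<close> \<open>n > 0\<close> this IH]
  have "real (card (C (Suc n) q M)) \<le> ?K ^ (n - 1) * ?K * real q powi (int M + e - 2 ^ n + 1)" .
  also have "?K ^ (n - 1) * ?K = ?K ^ (Suc n - 1)"
    using \<open>n > 0\<close> by (metis power_minus_mult diff_Suc_1)
  also have "int M + e - 2 ^ n + 1 = int M - 2 ^ Suc n + int (Suc n) + 1"
    by (simp add: e_def)
  finally show ?case .
qed

end
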